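(* Let $(X,\leq)$ be a bi-directed partially ordered set, let $d$ be a complete metric on $X$, and let $A:X^{2}\to X$ be a mixed monotone operator such that, for some $\varphi\in\Phi$, $$d\big(A(x,y),A(u,v)\big)\leq\varphi\big(\max\{d(x,u),d(y,v)\}\big)\quad\text{for all }x,y,u,v\in X\text{ with }x\leq u,\ y\geq v.$$ Assume that either (b1) $A$ is continuous (with respect to the product topology on $X^2$ induced by $d$), or (b2) every nondecreasing convergent sequence in $X$ is bounded from above by its limit, and every nonincreasing convergent sequence in $X$ is bounded from below by its limit. If there exist $x_{0},y_{0}\in X$ such that $x_{0}\leq A(x_{0},y_{0})$ and $y_{0}\geq A(y_{0},x_{0})$, then there exists $x^{\ast}\in X$ such that $(x^{\ast},x^{\ast})$ is the unique coupled fixed point of $A$ (in particular, $x^{\ast}$ is the unique fixed point of $A$), and $A^{n}(x,y)\to x^{\ast}$ as $n\to\infty$ for all $x,y\in X$.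
   Context: A quasi-ordered set $(X,\leq)$ is bi-directed if every two-element subset of $X$ has both a lower bound and an upper bound. An operator $A:X^2\to X$ is mixed monotone if it is nondecreasing in its first argument and nonincreasing in its second argument. A pair $(x,y)\in X^2$ is a coupled fixed point of $A$ if $A(x,y)=x$ and $A(y,x)=y$; $x$ is a fixed point of $A$ if $A(x,x)=x$. $\Phi$ denotes the set of nondecreasing functions $\varphi:[0,\infty)\to[0,\infty)$ such that $\varphi^{n}(t)\to0$ as $n\to\infty$ for every $t\geq0$, where $\varphi^n$ is the $n$-th iterate of $\varphi$. For bivariate operators $A:X^2\to Y$, $B:Y^2\to Z$, the symmetric composition is $(B\ast A)(x,y)=B(A(x,y),A(y,x))$. The iterates of $A:X^2\to X$ are defined by $A^{0}=P_X$, where $P_X(x,y)=x$, and $A^{n+1}=A\ast A^{n}$ for $n\geq0$. *)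

theory Defs
  imports "HOL-Analysis.Analysis"
begin

definition bi_directed :: "'a::order itself \<Rightarrow> bool" where
  "bi_directed _ \<longleftrightarrow> (\<forall>x y::'a. (\<exists>l. l \<le> x \<and> l \<le> y) \<and> (\<exists>u. x \<le> u \<and> y \<le> u))"

definition mixed_monotone :: "('a::order \<Rightarrow> 'a \<Rightarrow> 'a) \<Rightarrow> bool" where
  "mixed_monotone A \<longleftrightarrow>
     (\<forall>x x' y. x \<le> x' \<longrightarrow> A x y \<le> A x' y) \<and>
     (\<forall>x y y'. y \<le> y' \<longrightarrow> A x y' \<le> A x y)"

definition Phi :: "(real \<Rightarrow> real) set" where
  "Phi = {\<phi>. mono_on {0..} \<phi> \<and> (\<forall>t\<ge>0. \<phi> t \<ge> 0) \<and>
              (\<forall>t\<ge>0. (\<lambda>n. (\<phi> ^^ n) t) \<longlonglongrightarrow> 0)}"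

definition coupled_fixed_point :: "('a \<Rightarrow> 'a \<Rightarrow> 'a) \<Rightarrow> 'a \<Rightarrow> 'a \<Rightarrow> bool" where
  "coupled_fixed_point A x y \<longleftrightarrow> A x y = x \<and> A y x = y"

fun iter_op :: "('a \<Rightarrow> 'a \<Rightarrow> 'a) \<Rightarrow> nat \<Rightarrow> 'a \<Rightarrow> 'a \<Rightarrow> 'a" where
  "iter_op A 0 x y = x"
| "iter_op A (Suc n) x y = A (iter_op A n x y) (iter_op A n y x)"

end

theory Submission
  imports Defs
begin

(* Pass from A to the symmetric operator T(x,y) = (A(x,y), A(y,x)) on X \<times> X,
   ordered by (x,y) \<sqsubseteq> (u,v) iff x \<le> u and v \<le> y and measured by the max-distance
   D((x,y),(u,v)) = max (d x u) (d y v).  Mixed monotonicity makes T monotone for \<sqsubseteq>, the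
   contraction hypothesis says D(Tp,Tq) \<le> \<phi>(D(p,q)) for comparable p, q, and the n-th iterate
   of T is (A^n(x,y), A^n(y,x)).  Coupled fixed points of A are exactly fixed points of T. *)

section \<open>Comparison functions\<close>

lemma Phi_mono: "\<phi> \<in> Phi \<Longrightarrow> 0 \<le> s \<Longrightarrow> s \<le> t \<Longrightarrow> \<phi> s \<le> \<phi> t"
  and Phi_nonneg: "\<phi> \<in> Phi \<Longrightarrow> 0 \<le> t \<Longrightarrow> 0 \<le> \<phi> t"
  and Phi_iter_tendsto: "\<phi> \<in> Phi \<Longrightarrow> 0 \<le> t \<Longrightarrow> (\<lambda>n. (\<phi> ^^ n) t) \<longlonglongrightarrow> 0"
  unfolding Phi_def by (auto intro: mono_onD)

lemma Phi_iter_nonneg: "\<phi> \<in> Phi \<Longrightarrow> 0 \<le> t \<Longrightarrow> 0 \<le> (\<phi> ^^ n) t"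
  by (induction n) (auto intro: Phi_nonneg)

lemma Phi_iter_mono: "\<phi> \<in> Phi \<Longrightarrow> 0 \<le> s \<Longrightarrow> s \<le> t \<Longrightarrow> (\<phi> ^^ n) s \<le> (\<phi> ^^ n) t"
  by (induction n) (auto intro: Phi_mono Phi_iter_nonneg)

text \<open>A comparison function can never fail to decrease a positive argument: otherwise its
  iterates would stay above that argument instead of tending to zero.\<close>
lemma Phi_no_growth:
  assumes phi: "\<phi> \<in> Phi" and c: "0 < c"
  shows "\<not> c \<le> \<phi> c"
proof
  assume grow: "c \<le> \<phi> c"
  have "c \<le> (\<phi> ^^ n) c" for n
  proof (induction n)
    case (Suc n)
    have "(\<phi> ^^ n) c \<le> (\<phi> ^^ n) (\<phi> c)" using Phi_iter_mono[OF phi] c grow by simp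
    with Suc show ?case by (simp add: funpow_Suc_right del: funpow.simps)
  qed simp
  then have "c \<le> 0" using LIMSEQ_le_const[OF Phi_iter_tendsto[OF phi, of c]] c by auto
  with c show False by simp
qed

lemma Phi_less: "\<phi> \<in> Phi \<Longrightarrow> 0 < t \<Longrightarrow> \<phi> t < t"
  using Phi_no_growth[of \<phi> t] by force

text \<open>At zero: if \<phi> 0 > 0 then monotonicity gives \<phi> 0 \<le> \<phi> (\<phi> 0), which is excluded.\<close>
lemma Phi_le:
  assumes phi: "\<phi> \<in> Phi" and t: "0 \<le> t"
  shows "\<phi> t \<le> t"
proof (cases "t = 0")
  case True
  have "\<phi> 0 \<le> \<phi> (\<phi> 0)" using Phi_mono[OF phi] Phi_nonneg[OF phi] by simp
  with True show ?thesis using Phi_no_growth[OF phi, of "\<phi> 0"] by force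
next
  case False
  with t show ?thesis using Phi_less[OF phi, of t] by simp
qed

section \<open>The max-distance and the mixed order on pairs\<close>

definition pair_dist :: "'a::metric_space \<times> 'a \<Rightarrow> 'a \<times> 'a \<Rightarrow> real" where
  "pair_dist p q = max (dist (fst p) (fst q)) (dist (snd p) (snd q))"

definition pair_le :: "'a::order \<times> 'a \<Rightarrow> 'a \<times> 'a \<Rightarrow> bool" where
  "pair_le p q \<longleftrightarrow> fst p \<le> fst q \<and> snd q \<le> snd p"

lemma pair_dist_nonneg: "0 \<le> pair_dist p q"
  by (simp add: pair_dist_def le_max_iff_disj)

lemma pair_dist_commute: "pair_dist p q = pair_dist q p"
  by (simp add: pair_dist_def dist_commute)

lemma pair_dist_triangle: "pair_dist p r \<le> pair_dist p q + pair_dist q r"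
  unfolding pair_dist_def
  using dist_triangle[of "fst p" "fst r" "fst q"] dist_triangle[of "snd p" "snd r" "snd q"]
  by (simp add: max_def)

lemma pair_dist_components:
  "dist (fst p) (fst q) \<le> pair_dist p q" "dist (snd p) (snd q) \<le> pair_dist p q"
  by (simp_all add: pair_dist_def)

lemma pair_dist_tendsto_0_iff:
  "((\<lambda>n. pair_dist (f n) p) \<longlongrightarrow> 0) F \<longleftrightarrow> (f \<longlongrightarrow> p) F"
proof
  assume D: "((\<lambda>n. pair_dist (f n) p) \<longlongrightarrow> 0) F"
  have "((\<lambda>n. dist (fst (f n)) (fst p)) \<longlongrightarrow> 0) F" "((\<lambda>n. dist (snd (f n)) (snd p)) \<longlongrightarrow> 0) F"
    by (rule tendsto_sandwich[OF _ _ tendsto_const D];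
        simp add: pair_dist_components always_eventually)+
  then have "((\<lambda>n. fst (f n)) \<longlongrightarrow> fst p) F" "((\<lambda>n. snd (f n)) \<longlongrightarrow> snd p) F"
    by (metis tendsto_dist_iff)+
  then have "((\<lambda>n. (fst (f n), snd (f n))) \<longlongrightarrow> (fst p, snd p)) F"
    by (rule tendsto_Pair)
  then show "(f \<longlongrightarrow> p) F" by simp
next
  assume "(f \<longlongrightarrow> p) F"
  then have "((\<lambda>n. fst (f n)) \<longlongrightarrow> fst p) F" "((\<lambda>n. snd (f n)) \<longlongrightarrow> snd p) F"
    by (rule tendsto_fst, rule tendsto_snd)
  then have "((\<lambda>n. dist (fst (f n)) (fst p)) \<longlongrightarrow> 0) F" "((\<lambda>n. dist (snd (f n)) (snd p)) \<longlongrightarrow> 0) F"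
    by (metis tendsto_dist_iff)+
  then have "((\<lambda>n. max (dist (fst (f n)) (fst p)) (dist (snd (f n)) (snd p))) \<longlongrightarrow> max 0 0) F"
    by (rule tendsto_max)
  then show "((\<lambda>n. pair_dist (f n) p) \<longlongrightarrow> 0) F" by (simp add: pair_dist_def)
qed

lemma pair_dist_Cauchy_convergent:
  fixes f :: "nat \<Rightarrow> 'a::complete_space \<times> 'a"
  assumes cauchy: "\<And>e. 0 < e \<Longrightarrow> \<exists>N. \<forall>m\<ge>N. \<forall>n\<ge>N. pair_dist (f m) (f n) < e"
  shows "\<exists>p. f \<longlonglongrightarrow> p"
proof -
  have "Cauchy (\<lambda>n. fst (f n))" "Cauchy (\<lambda>n. snd (f n))"
    by (rule metric_CauchyI; metis cauchy pair_dist_components le_less_trans)+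
  then obtain x y where "(\<lambda>n. fst (f n)) \<longlonglongrightarrow> x" "(\<lambda>n. snd (f n)) \<longlonglongrightarrow> y"
    using Cauchy_convergent convergent_def by blast
  then have "(\<lambda>n. (fst (f n), snd (f n))) \<longlonglongrightarrow> (x, y)" by (rule tendsto_Pair)
  then show ?thesis by auto
qed

section \<open>The symmetric operator\<close>

definition sym_op :: "('a \<Rightarrow> 'a \<Rightarrow> 'a) \<Rightarrow> 'a \<times> 'a \<Rightarrow> 'a \<times> 'a" where
  "sym_op A p = (A (fst p) (snd p), A (snd p) (fst p))"

lemma sym_op_funpow: "(sym_op A ^^ n) (x, y) = (iter_op A n x y, iter_op A n y x)"
  by (induction n) (simp_all add: sym_op_def)

lemma sym_op_fixed_iff: "sym_op A (x, y) = (x, y) \<longleftrightarrow> coupled_fixed_point A x y"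
  by (auto simp: sym_op_def coupled_fixed_point_def)

lemma continuous_sym_op:
  assumes "continuous_on UNIV (\<lambda>p. A (fst p) (snd p))"
  shows "continuous_on UNIV (sym_op A)"
proof -
  have "continuous_on UNIV (\<lambda>p. A (snd p) (fst p))"
    using continuous_on_compose[OF continuous_on_swap assms[THEN continuous_on_subset]]
    by (simp add: o_def)
  then show ?thesis
    unfolding sym_op_def using assms by (intro continuous_on_Pair)
qed

lemma orbit_limit_fixed:
  fixes T :: "'b::t2_space \<Rightarrow> 'b"
  assumes cont: "continuous_on UNIV T" and lim: "(\<lambda>n. (T ^^ n) p) \<longlonglongrightarrow> q"
  shows "T q = q"
proof -
  have "(\<lambda>n. T ((T ^^ n) p)) \<longlonglongrightarrow> T q"
    using continuous_on_tendsto_compose[OF cont lim] by simp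
  moreover have "(\<lambda>n. T ((T ^^ n) p)) \<longlonglongrightarrow> q"
    using LIMSEQ_Suc[OF lim] by simp
  ultimately show ?thesis by (rule LIMSEQ_unique)
qed

section \<open>Mixed monotone \<open>\<phi>\<close>-contractions\<close>

locale mixed_contraction =
  fixes A :: "'a::{order, metric_space} \<Rightarrow> 'a \<Rightarrow> 'a" and \<phi> :: "real \<Rightarrow> real"
  assumes mm: "mixed_monotone A"
    and phi: "\<phi> \<in> Phi"
    and contr: "\<forall>x y u v. x \<le> u \<and> v \<le> y \<longrightarrow>
                  dist (A x y) (A u v) \<le> \<phi> (max (dist x u) (dist y v))"
begin

abbreviation T :: "'a \<times> 'a \<Rightarrow> 'a \<times> 'a" where "T \<equiv> sym_op A"

lemma T_mono:
  assumes "pair_le p q"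
  shows "pair_le (T p) (T q)"
proof -
  have le: "fst p \<le> fst q" "snd q \<le> snd p" using assms by (auto simp: pair_le_def)
  have inc: "x \<le> x' \<Longrightarrow> A x y \<le> A x' y" and dec: "y \<le> y' \<Longrightarrow> A x y' \<le> A x y" for x x' y y'
    using mm by (auto simp: mixed_monotone_def)
  have "A (fst p) (snd p) \<le> A (fst q) (snd q)"
    using inc[OF le(1)] dec[OF le(2)] by (rule order_trans)
  moreover have "A (snd q) (fst q) \<le> A (snd p) (fst p)"
    using inc[OF le(2)] dec[OF le(1)] by (rule order_trans)
  ultimately show ?thesis by (simp add: pair_le_def sym_op_def)
qed

lemma T_contr:
  assumes "pair_le p q"
  shows "pair_dist (T p) (T q) \<le> \<phi> (pair_dist p q)"
proof -
  have le: "fst p \<le> fst q" "snd q \<le> snd p" using assms by (auto simp: pair_le_def)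
  have "dist (A (fst p) (snd p)) (A (fst q) (snd q)) \<le> \<phi> (pair_dist p q)"
    using contr le by (auto simp: pair_dist_def)
  moreover have "dist (A (snd q) (fst q)) (A (snd p) (fst p))
      \<le> \<phi> (max (dist (snd q) (snd p)) (dist (fst q) (fst p)))"
    using contr le by blast
  ultimately show ?thesis
    by (simp add: pair_dist_def sym_op_def dist_commute max.commute)
qed

lemma T_funpow_mono: "pair_le p q \<Longrightarrow> pair_le ((T ^^ n) p) ((T ^^ n) q)"
  by (induction n) (auto intro: T_mono)

lemma T_funpow_contr:
  assumes "pair_le p q"
  shows "pair_dist ((T ^^ n) p) ((T ^^ n) q) \<le> (\<phi> ^^ n) (pair_dist p q)"
proof (induction n)
  case (Suc n)
  have "pair_dist ((T ^^ Suc n) p) ((T ^^ Suc n) q) \<le> \<phi> (pair_dist ((T ^^ n) p) ((T ^^ n) q))"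
    using T_contr[OF T_funpow_mono[OF assms]] by simp
  also have "\<dots> \<le> \<phi> ((\<phi> ^^ n) (pair_dist p q))"
    using Phi_mono[OF phi] pair_dist_nonneg Suc by blast
  finally show ?case by simp
qed simp

lemma comparable_orbits_approach:
  assumes "pair_le p q"
  shows "(\<lambda>n. pair_dist ((T ^^ n) p) ((T ^^ n) q)) \<longlonglongrightarrow> 0"
  by (rule tendsto_sandwich[of "\<lambda>_. 0" _ _ "\<lambda>n. (\<phi> ^^ n) (pair_dist p q)"])
    (auto simp: pair_dist_nonneg T_funpow_contr[OF assms] Phi_iter_tendsto[OF phi])

lemma orbit_chain:
  assumes start: "pair_le p0 (T p0)" and "m \<le> n"
  shows "pair_le ((T ^^ m) p0) ((T ^^ n) p0)"
  using \<open>m \<le> n\<close>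
proof (induction n rule: dec_induct)
  case (step n)
  have "pair_le ((T ^^ n) p0) ((T ^^ Suc n) p0)"
    using T_funpow_mono[OF start, of n] by (simp add: funpow_Suc_right del: funpow.simps)
  with step show ?case by (auto simp: pair_le_def intro: order_trans)
qed (simp add: pair_le_def)

text \<open>Given \<epsilon> > 0, pick N with D(P N, P (N+1)) < \<epsilon> - \<phi> \<epsilon>; then the
  ball of radius \<epsilon> around P N contains P m for every m \<ge> N, by induction on m.\<close>
lemma orbit_cauchy:
  assumes start: "pair_le p0 (T p0)" and e: "0 < e"
  shows "\<exists>N. \<forall>m\<ge>N. \<forall>n\<ge>N. pair_dist ((T ^^ m) p0) ((T ^^ n) p0) < e"
proof -
  define P where "P n = (T ^^ n) p0" for n
  define \<epsilon> where "\<epsilon> = e / 3"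
  have eps: "0 < \<epsilon>" using e by (simp add: \<epsilon>_def)
  have "(\<lambda>n. pair_dist (P n) (P (Suc n))) \<longlonglongrightarrow> 0"
    using comparable_orbits_approach[OF start]
    by (simp add: P_def funpow_Suc_right del: funpow.simps)
  moreover have "0 < \<epsilon> - \<phi> \<epsilon>" using Phi_less[OF phi eps] by simp
  ultimately obtain N where N: "pair_dist (P N) (P (Suc N)) < \<epsilon> - \<phi> \<epsilon>"
    by (metis (no_types, lifting) order_tendstoD(2) eventually_sequentially order_refl)
  have ball: "pair_dist (P N) (P m) \<le> \<epsilon>" if "N \<le> m" for m
    using that
  proof (induction m rule: dec_induct)
    case (step m)
    have "pair_dist (P (Suc N)) (P (Suc m)) \<le> \<phi> (pair_dist (P N) (P m))"
      using T_contr[OF orbit_chain[OF start step(1)]] by (simp add: P_def)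
    also have "\<dots> \<le> \<phi> \<epsilon>" using Phi_mono[OF phi] pair_dist_nonneg step(3) by blast
    finally show ?case
      using pair_dist_triangle[of "P N" "P (Suc m)" "P (Suc N)"] N by linarith
  qed (simp add: pair_dist_def eps less_imp_le)
  have "pair_dist (P m) (P n) < e" if "N \<le> m" "N \<le> n" for m n
    using pair_dist_triangle[of "P m" "P n" "P N"] ball[OF that(1)] ball[OF that(2)]
      pair_dist_commute[of "P m" "P N"] e by (simp add: \<epsilon>_def)
  then show ?thesis unfolding P_def by blast
qed

text \<open>Under hypothesis (b2), the limit of such an orbit lies above every orbit point for the
  mixed order, so the contraction applies between orbit points and the limit.\<close>
lemma orbit_limit_fixed_by_order:
  assumes start: "pair_le p0 (T p0)" and lim: "(\<lambda>n. (T ^^ n) p0) \<longlonglongrightarrow> q"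
    and inc_bound: "\<forall>(s::nat \<Rightarrow> 'a) L. incseq s \<and> s \<longlonglongrightarrow> L \<longrightarrow> (\<forall>n. s n \<le> L)"
    and dec_bound: "\<forall>(s::nat \<Rightarrow> 'a) L. decseq s \<and> s \<longlonglongrightarrow> L \<longrightarrow> (\<forall>n. L \<le> s n)"
  shows "T q = q"
proof -
  define P where "P n = (T ^^ n) p0" for n
  have mono: "incseq (\<lambda>n. fst (P n))" "decseq (\<lambda>n. snd (P n))"
    using orbit_chain[OF start] by (auto simp: incseq_def decseq_def pair_le_def P_def)
  have conv: "(\<lambda>n. fst (P n)) \<longlonglongrightarrow> fst q" "(\<lambda>n. snd (P n)) \<longlonglongrightarrow> snd q"
    using lim by (simp_all add: P_def tendsto_fst tendsto_snd)
  have below: "pair_le (P n) q" for n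
    using inc_bound[rule_format, OF conjI[OF mono(1) conv(1)]]
      dec_bound[rule_format, OF conjI[OF mono(2) conv(2)]]
    by (simp add: pair_le_def)
  have to_q: "(\<lambda>n. pair_dist (P n) q) \<longlonglongrightarrow> 0"
    using lim by (simp add: P_def pair_dist_tendsto_0_iff)
  have "pair_dist (P (Suc n)) (T q) \<le> pair_dist (P n) q" for n
    using T_contr[OF below[of n]] Phi_le[OF phi pair_dist_nonneg, of "P n" q]
    by (simp add: P_def)
  then have "(\<lambda>n. pair_dist (P (Suc n)) (T q)) \<longlonglongrightarrow> 0"
    by (intro tendsto_sandwich[OF _ _ tendsto_const to_q]) (simp_all add: pair_dist_nonneg)
  then have "(\<lambda>n. P (Suc n)) \<longlonglongrightarrow> T q" by (simp add: pair_dist_tendsto_0_iff)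
  moreover have "(\<lambda>n. P (Suc n)) \<longlonglongrightarrow> q" using LIMSEQ_Suc[OF lim] by (simp add: P_def)
  ultimately show ?thesis by (rule LIMSEQ_unique)
qed

text \<open>On a bi-directed order every pair has a common lower bound with a fixed point q of T;
  comparing both orbits with the orbit of that bound shows that all orbits converge to q.\<close>
lemma orbits_tend_to_fixed_point:
  assumes bidir: "bi_directed TYPE('a)" and fixed: "T q = q"
  shows "(\<lambda>n. (T ^^ n) p) \<longlonglongrightarrow> q"
proof -
  obtain l u where l: "l \<le> fst p" "l \<le> fst q" and u: "snd p \<le> u" "snd q \<le> u"
    using bidir unfolding bi_directed_def by meson
  have rp: "pair_le (l, u) p" and rq: "pair_le (l, u) q" using l u by (simp_all add: pair_le_def)
  have q_orbit: "(T ^^ n) q = q" for n by (induction n) (simp_all add: fixed)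
  define R where "R n = (T ^^ n) (l, u)" for n
  have "(\<lambda>n. pair_dist (R n) ((T ^^ n) p)) \<longlonglongrightarrow> 0" "(\<lambda>n. pair_dist (R n) q) \<longlonglongrightarrow> 0"
    using comparable_orbits_approach[OF rp] comparable_orbits_approach[OF rq]
    by (simp_all add: R_def q_orbit)
  then have sum: "(\<lambda>n. pair_dist (R n) ((T ^^ n) p) + pair_dist (R n) q) \<longlonglongrightarrow> 0"
    using tendsto_add by fastforce
  have "pair_dist ((T ^^ n) p) q \<le> pair_dist (R n) ((T ^^ n) p) + pair_dist (R n) q" for n
    using pair_dist_triangle[of "(T ^^ n) p" q "R n"] pair_dist_commute[of "R n"] by simp
  then have "(\<lambda>n. pair_dist ((T ^^ n) p) q) \<longlonglongrightarrow> 0"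
    by (intro tendsto_sandwich[OF _ _ tendsto_const sum]) (simp_all add: pair_dist_nonneg)
  then show ?thesis by (simp add: pair_dist_tendsto_0_iff)
qed

text \<open>Consequently the fixed point is unique, and since swapping the components of a fixed
  point of T gives another one, it lies on the diagonal.\<close>
lemma fixed_point_unique:
  assumes bidir: "bi_directed TYPE('a)" and fixed: "T q = q" "T p = p"
  shows "p = q"
proof -
  have "(T ^^ n) p = p" for n by (induction n) (simp_all add: fixed)
  then have "(\<lambda>_. p) \<longlonglongrightarrow> q" using orbits_tend_to_fixed_point[OF bidir fixed(1), of p] by simp
  then show ?thesis by (simp add: LIMSEQ_const_iff)
qed

lemma fixed_point_diagonal:
  assumes bidir: "bi_directed TYPE('a)" and fixed: "T q = q"
  shows "snd q = fst q"
proof -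
  have "T (snd q, fst q) = (snd q, fst q)"
    using fixed by (simp add: sym_op_def prod_eq_iff)
  then have "(snd q, fst q) = q" by (rule fixed_point_unique[OF bidir fixed])
  then show ?thesis by (metis fst_conv snd_conv)
qed

end

theorem theorem2:
  fixes A :: "'a::{order, complete_space} \<Rightarrow> 'a \<Rightarrow> 'a"
    and \<phi> :: "real \<Rightarrow> real"
    and x0 y0 :: 'a
  assumes bidir: "bi_directed TYPE('a)"
    and mm: "mixed_monotone A"
    and phi: "\<phi> \<in> Phi"
    and contr: "\<forall>x y u v. x \<le> u \<and> v \<le> y \<longrightarrow>
                  dist (A x y) (A u v) \<le> \<phi> (max (dist x u) (dist y v))"
    and b: "continuous_on UNIV (\<lambda>p. A (fst p) (snd p)) \<or>
            ((\<forall>(s::nat \<Rightarrow> 'a) L. incseq s \<and> s \<longlonglongrightarrow> L \<longrightarrow> (\<forall>n. s n \<le> L)) \<and>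
             (\<forall>(s::nat \<Rightarrow> 'a) L. decseq s \<and> s \<longlonglongrightarrow> L \<longrightarrow> (\<forall>n. L \<le> s n)))"
    and init: "x0 \<le> A x0 y0" "A y0 x0 \<le> y0"
  shows "\<exists>xs. (\<forall>x y. coupled_fixed_point A x y \<longleftrightarrow> x = xs \<and> y = xs) \<and>
              (\<forall>z. A z z = z \<longleftrightarrow> z = xs) \<and>
              (\<forall>x y. (\<lambda>n. iter_op A n x y) \<longlonglongrightarrow> xs)"
proof -
  interpret mixed_contraction A \<phi> using mm phi contr by unfold_locales
  have start: "pair_le (x0, y0) (T (x0, y0))" using init by (simp add: pair_le_def sym_op_def)
  obtain q where lim: "(\<lambda>n. (T ^^ n) (x0, y0)) \<longlonglongrightarrow> q"
    using pair_dist_Cauchy_convergent[of "\<lambda>n. (T ^^ n) (x0, y0)"] orbit_cauchy[OF start] by blast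
  have fixed: "T q = q"
    using b
  proof
    assume "continuous_on UNIV (\<lambda>p. A (fst p) (snd p))"
    then show ?thesis by (rule orbit_limit_fixed[OF continuous_sym_op lim])
  qed (use orbit_limit_fixed_by_order[OF start lim] in blast)
  define xs where "xs = fst q"
  have q: "q = (xs, xs)" using fixed_point_diagonal[OF bidir fixed] by (simp add: xs_def prod_eq_iff)
  have coupled: "coupled_fixed_point A x y \<longleftrightarrow> x = xs \<and> y = xs" for x y
    using fixed_point_unique[OF bidir fixed, of "(x, y)"] fixed
    unfolding sym_op_fixed_iff[symmetric] q by blast
  have iterates: "(\<lambda>n. iter_op A n x y) \<longlonglongrightarrow> xs" for x y
    using tendsto_fst[OF orbits_tend_to_fixed_point[OF bidir fixed, of "(x, y)"]]
    by (simp add: sym_op_funpow q)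
  show ?thesis
  proof (intro exI conjI allI)
    show "A z z = z \<longleftrightarrow> z = xs" for z
      using coupled[of z z] by (simp add: coupled_fixed_point_def)
  qed (use coupled iterates in blast)+
qed

end
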